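(* Let $g\colon M^2\to\mathbb{R}^4$ be a simply connected oriented conformal minimal immersion with complex structure $J$, and let $h\colon M^2\to\mathbb{R}^4$ satisfy $h_*=g_*\circ J$. Suppose $g+ih$ takes values in the quadric $\{Z\in\mathbb{C}^4:\langle\!\langle Z,Z\rangle\!\rangle=0\}$, i.e. $\langle g,h\rangle\equiv0$ and $\|g\|\equiv\|h\|$. Then there is an orthogonal complex structure $\mathcal{J}$ on $\mathbb{R}^4$ (a linear isometry with $\mathcal{J}^2=-I$) such that $g$ is holomorphic with respect to $\mathcal{J}$ (i.e. $g_*\circ J=\mathcal{J}\circ g_*$) and $h=\mathcal{J}g$.
   Context: $\langle\!\langle Z,W\rangle\!\rangle=\sum_jz_jw_j$ is the complex bilinear inner product on $\mathbb{C}^4$; for $Z=U+iV$, $\langle\!\langle Z,Z\rangle\!\rangle=\|U\|^2-\|V\|^2+2i\langle U,V\rangle$. *)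

theory Defs
  imports "HOL-Analysis.Analysis"
begin

text \<open>The surface M is modelled (via uniformization; a compact surface admits no
minimal immersion into R^4) as a simply connected open domain U of the complex
plane with its standard orientation and complex structure J v = i * v.
dmap f z is the differential f_* at z.\<close>

definition dmap :: "(complex \<Rightarrow> 'b::real_normed_vector) \<Rightarrow> complex \<Rightarrow> complex \<Rightarrow> 'b" where
  "dmap f z = frechet_derivative f (at z)"

definition conformal_immersion :: "complex set \<Rightarrow> (complex \<Rightarrow> real^4) \<Rightarrow> bool" where
  "conformal_immersion U g \<longleftrightarrow> open U \<and>
     (\<forall>z\<in>U. g differentiable (at z) \<and>
        norm (dmap g z 1) = norm (dmap g z \<i>) \<and>
        dmap g z 1 \<bullet> dmap g z \<i> = 0 \<and>
        dmap g z 1 \<noteq> 0)"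

definition mean_curvature_vector :: "(complex \<Rightarrow> real^4) \<Rightarrow> complex \<Rightarrow> real^4" where
  "mean_curvature_vector g z =
     (1 / (2 * (norm (dmap g z 1))\<^sup>2)) *\<^sub>R
       (dmap (\<lambda>w. dmap g w 1) z 1 + dmap (\<lambda>w. dmap g w \<i>) z \<i>)"

definition conformal_minimal_immersion :: "complex set \<Rightarrow> (complex \<Rightarrow> real^4) \<Rightarrow> bool" where
  "conformal_minimal_immersion U g \<longleftrightarrow> conformal_immersion U g \<and>
     (\<forall>z\<in>U. (\<lambda>w. dmap g w 1) differentiable (at z) \<and>
             (\<lambda>w. dmap g w \<i>) differentiable (at z) \<and>
             mean_curvature_vector g z = 0)"

end

theory Submission
  imports Defs "HOL-Complex_Analysis.Complex_Analysis"
begin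

text \<open>Writing Z = g - i h, the relation h_* = g_* J is the Cauchy-Riemann equation for Z, so Z is
  holomorphic with Z' = g_x - i g_y; the hypotheses (for Z) and conformality (for Z') say that both
  lie on the null quadric. Identifying C^4 with 2x2 matrices so that the bilinear form becomes the
  determinant, Z and Z' are singular, and differentiating det Z = 0 then shows that every row
  Wronskian of Z times every column Wronskian vanishes. By the identity theorem Z has a constant
  right or left kernel vector (p, q). A nonzero (p, q) determines an orthogonal complex structure
  whose graph consists of the pairs (x, y) with x - i y annihilated by (p, q); it maps g to h and
  g_x to g_y, and the latter makes g_* complex linear.\<close>

definition orthogonal_complex_structure :: "('a::real_normed_vector \<Rightarrow> 'a) \<Rightarrow> bool" where
  "orthogonal_complex_structure J \<longleftrightarrow>
     linear J \<and> (\<forall>x. norm (J x) = norm x) \<and> (\<forall>x. J (J x) = - x)"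

lemma orthogonal_complex_structure_conj:
  assumes J: "orthogonal_complex_structure J"
    and R: "linear R" "\<And>x. norm (R x) = norm x" "\<And>x. R (R x) = x"
  shows "orthogonal_complex_structure (R \<circ> J \<circ> R)"
proof -
  have "R (- x) = - R x" for x using R(1) by (rule linear_neg)
  then show ?thesis
    using J R by (simp add: orthogonal_complex_structure_def linear_compose)
qed

section \<open>Complex structures on R^4 from vectors of C^2\<close>

definition cfst :: "real^4 \<Rightarrow> complex" where "cfst x = Complex (x$1) (x$2)"
definition csnd :: "real^4 \<Rightarrow> complex" where "csnd x = Complex (x$3) (x$4)"

definition of_cpair :: "complex \<Rightarrow> complex \<Rightarrow> real^4" where
  "of_cpair w v = (\<chi> k. if k = 1 then Re w else if k = 2 then Im w else if k = 3 then Re v else Im v)"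

lemma cfst_of_cpair [simp]: "cfst (of_cpair w v) = w"
  and csnd_of_cpair [simp]: "csnd (of_cpair w v) = v"
  by (simp_all add: cfst_def csnd_def of_cpair_def complex_eq_iff)

lemma vec4_eq_iff_cfst_csnd: "x = y \<longleftrightarrow> cfst x = cfst y \<and> csnd x = csnd y"
  by (auto simp: cfst_def csnd_def vec_eq_iff forall_4 complex_eq_iff)

lemma cfst_add [simp]: "cfst (x + y) = cfst x + cfst y"
  and csnd_add [simp]: "csnd (x + y) = csnd x + csnd y"
  and cfst_scaleR [simp]: "cfst (c *\<^sub>R x) = of_real c * cfst x"
  and csnd_scaleR [simp]: "csnd (c *\<^sub>R x) = of_real c * csnd x"
  and cfst_minus [simp]: "cfst (- x) = - cfst x"
  and csnd_minus [simp]: "csnd (- x) = - csnd x"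
  and cfst_diff [simp]: "cfst (x - y) = cfst x - cfst y"
  and csnd_diff [simp]: "csnd (x - y) = csnd x - csnd y"
  by (simp_all add: cfst_def csnd_def complex_eq_iff)

lemma norm_vec4_square: "(norm x)\<^sup>2 = (cmod (cfst x))\<^sup>2 + (cmod (csnd x))\<^sup>2"
proof -
  have "(norm x)\<^sup>2 = (x$1)\<^sup>2 + (x$2)\<^sup>2 + (x$3)\<^sup>2 + (x$4)\<^sup>2"
    by (simp only: power2_norm_eq_inner) (simp add: inner_vec_def sum_4 power2_eq_square)
  then show ?thesis by (simp add: cfst_def csnd_def cmod_power2)
qed

definition kfst :: "complex \<Rightarrow> complex \<Rightarrow> real^4 \<Rightarrow> complex" where
  "kfst p q x = cfst x * p + csnd x * q"
definition ksnd :: "complex \<Rightarrow> complex \<Rightarrow> real^4 \<Rightarrow> complex" where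
  "ksnd p q x = cnj (cfst x) * q - cnj (csnd x) * p"

lemma kfst_minus: "kfst p q (- x) = - kfst p q x"
  and ksnd_minus: "ksnd p q (- x) = - ksnd p q x"
  by (simp_all add: kfst_def ksnd_def algebra_simps)

lemma norm_kfst_ksnd:
  "(cmod (kfst p q x))\<^sup>2 + (cmod (ksnd p q x))\<^sup>2 = ((cmod p)\<^sup>2 + (cmod q)\<^sup>2) * (norm x)\<^sup>2"
proof -
  have "complex_of_real ((cmod (kfst p q x))\<^sup>2 + (cmod (ksnd p q x))\<^sup>2)
      = complex_of_real (((cmod p)\<^sup>2 + (cmod q)\<^sup>2) * ((cmod (cfst x))\<^sup>2 + (cmod (csnd x))\<^sup>2))"
    unfolding of_real_add of_real_mult complex_norm_square kfst_def ksnd_def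
    by (simp add: algebra_simps)
  then show ?thesis by (simp only: of_real_eq_iff norm_vec4_square)
qed

lemma kfst_ksnd_inj:
  assumes "(p, q) \<noteq> (0, 0)" "kfst p q x = kfst p q y" "ksnd p q x = ksnd p q y"
  shows "x = y"
proof -
  have "kfst p q (x - y) = 0" "ksnd p q (x - y) = 0"
    using assms(2,3) by (simp_all add: kfst_def ksnd_def algebra_simps)
  then have "((cmod p)\<^sup>2 + (cmod q)\<^sup>2) * (norm (x - y))\<^sup>2 = 0"
    by (metis norm_kfst_ksnd norm_zero power_zero_numeral add_0)
  moreover have "(cmod p)\<^sup>2 + (cmod q)\<^sup>2 \<noteq> 0"
    using assms(1) by (auto simp: add_nonneg_eq_0_iff)
  ultimately show ?thesis by auto
qed

definition cnorm2 :: "complex \<Rightarrow> complex \<Rightarrow> complex" where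
  "cnorm2 p q = p * cnj p + q * cnj q"

lemma cnj_cnorm2 [simp]: "cnj (cnorm2 p q) = cnorm2 p q"
  by (simp add: cnorm2_def mult.commute)

lemma cnorm2_nonzero: "(p, q) \<noteq> (0, 0) \<Longrightarrow> cnorm2 p q \<noteq> 0"
proof -
  assume "(p, q) \<noteq> (0, 0)"
  then have "(cmod p)\<^sup>2 + (cmod q)\<^sup>2 \<noteq> 0" by (auto simp: add_nonneg_eq_0_iff)
  then show ?thesis unfolding cnorm2_def by (metis complex_norm_square of_real_add of_real_eq_0_iff)
qed

text \<open>In the coordinates (kfst, cnj ksnd), obtained from (cfst, csnd) by the matrix
  A = [[p, q], [cnj q, - cnj p]] (a multiple of a unitary matrix), cstruct acts as diag(-i, i);
  the formula is A^-1 diag(-i, i) A.\<close>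
definition cstruct :: "complex \<Rightarrow> complex \<Rightarrow> real^4 \<Rightarrow> real^4" where
  "cstruct p q x =
     (let r = q * cnj q - p * cnj p; w = cfst x; v = csnd x
      in of_cpair (\<i> * (r * w - 2 * cnj p * q * v) / cnorm2 p q)
                  (- \<i> * (2 * p * cnj q * w + r * v) / cnorm2 p q))"

lemma linear_cstruct: "linear (cstruct p q)"
  by (rule linearI) (simp_all add: cstruct_def Let_def vec4_eq_iff_cfst_csnd divide_inverse
      algebra_simps)

lemma kfst_cstruct:
  "(p, q) \<noteq> (0, 0) \<Longrightarrow> kfst p q (cstruct p q x) = - \<i> * kfst p q x"
  by (drule cnorm2_nonzero) (simp add: kfst_def cstruct_def Let_def field_simps,
      simp add: cnorm2_def algebra_simps)

lemma ksnd_cstruct: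
  "(p, q) \<noteq> (0, 0) \<Longrightarrow> ksnd p q (cstruct p q x) = - \<i> * ksnd p q x"
  by (drule cnorm2_nonzero) (simp add: ksnd_def cstruct_def Let_def field_simps,
      simp add: cnorm2_def algebra_simps)

lemma orthogonal_complex_structure_cstruct:
  assumes "(p, q) \<noteq> (0, 0)"
  shows "orthogonal_complex_structure (cstruct p q)"
proof -
  have "(cmod p)\<^sup>2 + (cmod q)\<^sup>2 \<noteq> 0" using assms by (auto simp: add_nonneg_eq_0_iff)
  moreover have "((cmod p)\<^sup>2 + (cmod q)\<^sup>2) * (norm (cstruct p q x))\<^sup>2
      = ((cmod p)\<^sup>2 + (cmod q)\<^sup>2) * (norm x)\<^sup>2" for x
    unfolding norm_kfst_ksnd[symmetric] kfst_cstruct[OF assms] ksnd_cstruct[OF assms]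
    by (simp add: norm_mult)
  ultimately have "norm (cstruct p q x) = norm x" for x
    by (auto simp: power2_eq_iff_nonneg)
  moreover have "cstruct p q (cstruct p q x) = - x" for x
    by (rule kfst_ksnd_inj[OF assms])
       (simp_all add: kfst_cstruct[OF assms] ksnd_cstruct[OF assms] kfst_minus ksnd_minus)
  ultimately show ?thesis
    by (simp add: orthogonal_complex_structure_def linear_cstruct)
qed

section \<open>The null quadric as the cone of singular matrices\<close>

definition cvec :: "real^4 \<Rightarrow> real^4 \<Rightarrow> 4 \<Rightarrow> complex" where
  "cvec x y k = complex_of_real (x $ k) - \<i> * complex_of_real (y $ k)"

definition cdot :: "(4 \<Rightarrow> complex) \<Rightarrow> (4 \<Rightarrow> complex) \<Rightarrow> complex" where
  "cdot Z W = (\<Sum>k\<in>UNIV. Z k * W k)"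

text \<open>The matrix [[Z1 + i Z2, Z3 + i Z4], [-(Z3 - i Z4), Z1 - i Z2]] has determinant cdot Z Z
  (det_qmat): the null quadric of C^4 is the cone of singular 2x2 matrices.\<close>
definition qmat11 :: "(4 \<Rightarrow> complex) \<Rightarrow> complex" where "qmat11 Z = Z 1 + \<i> * Z 2"
definition qmat12 :: "(4 \<Rightarrow> complex) \<Rightarrow> complex" where "qmat12 Z = Z 3 + \<i> * Z 4"
definition qmat21 :: "(4 \<Rightarrow> complex) \<Rightarrow> complex" where "qmat21 Z = - (Z 3 - \<i> * Z 4)"
definition qmat22 :: "(4 \<Rightarrow> complex) \<Rightarrow> complex" where "qmat22 Z = Z 1 - \<i> * Z 2"

lemma det_qmat: "qmat11 Z * qmat22 Z - qmat12 Z * qmat21 Z = cdot Z Z"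
  by (simp add: qmat11_def qmat12_def qmat21_def qmat22_def cdot_def sum_4 algebra_simps)

lemma cdot_cvec_self:
  "cdot (cvec x y) (cvec x y) = complex_of_real ((norm x)\<^sup>2 - (norm y)\<^sup>2) - 2 * \<i> * complex_of_real (x \<bullet> y)"
  by (simp only: power2_norm_eq_inner)
    (simp add: cdot_def cvec_def sum_4 inner_vec_def complex_eq_iff algebra_simps)

definition qkernel :: "(4 \<Rightarrow> complex) \<Rightarrow> complex \<Rightarrow> complex \<Rightarrow> bool" where
  "qkernel Z p q \<longleftrightarrow> qmat11 Z * p + qmat12 Z * q = 0 \<and> qmat21 Z * p + qmat22 Z * q = 0"

definition qleft_kernel :: "(4 \<Rightarrow> complex) \<Rightarrow> complex \<Rightarrow> complex \<Rightarrow> bool" where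
  "qleft_kernel Z p q \<longleftrightarrow> qmat11 Z * p + qmat21 Z * q = 0 \<and> qmat12 Z * p + qmat22 Z * q = 0"

lemma qkernel_cvec_iff:
  "qkernel (cvec x y) p q \<longleftrightarrow> kfst p q x = \<i> * kfst p q y \<and> ksnd p q x = \<i> * ksnd p q y"
proof -
  have "qmat11 (cvec x y) * p + qmat12 (cvec x y) * q = kfst p q x - \<i> * kfst p q y"
    "qmat21 (cvec x y) * p + qmat22 (cvec x y) * q = ksnd p q x - \<i> * ksnd p q y"
    by (simp_all add: qmat11_def qmat12_def qmat21_def qmat22_def cvec_def kfst_def ksnd_def
        cfst_def csnd_def complex_eq_iff algebra_simps)
  then show ?thesis by (simp add: qkernel_def)
qed

lemma cstruct_eq_if_qkernel:
  assumes "(p, q) \<noteq> (0, 0)" "qkernel (cvec x y) p q"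
  shows "cstruct p q x = y"
  using assms(2) by (intro kfst_ksnd_inj[OF assms(1)])
    (simp_all add: qkernel_cvec_iff kfst_cstruct[OF assms(1)] ksnd_cstruct[OF assms(1)])

definition reflect3 :: "real^4 \<Rightarrow> real^4" where
  "reflect3 x = (\<chi> k. if k = 3 then - x $ k else x $ k)"

lemma linear_reflect3: "linear reflect3"
  by (rule linearI) (simp_all add: reflect3_def vec_eq_iff)

lemma reflect3_reflect3 [simp]: "reflect3 (reflect3 x) = x"
  by (simp add: reflect3_def vec_eq_iff)

lemma norm_reflect3: "norm (reflect3 x) = norm x"
  by (simp add: norm_vec_def L2_set_def reflect3_def sum_4)

lemma qleft_kernel_cvec_iff:
  "qleft_kernel (cvec x y) p q \<longleftrightarrow> qkernel (cvec (reflect3 x) (reflect3 y)) p q"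
  by (simp add: qleft_kernel_def qkernel_def qmat11_def qmat12_def qmat21_def qmat22_def
      cvec_def reflect3_def algebra_simps)

text \<open>The two alternatives are the two rulings of the quadric; the second reduces to the first
  by the reflection reflect3.\<close>
lemma complex_structure_of_common_kernel:
  assumes "(p, q) \<noteq> (0, 0)"
    and "(\<forall>(x, y)\<in>P. qkernel (cvec x y) p q) \<or> (\<forall>(x, y)\<in>P. qleft_kernel (cvec x y) p q)"
  shows "\<exists>J. orthogonal_complex_structure J \<and> (\<forall>(x, y)\<in>P. J x = y)"
  using assms(2)
proof
  assume "\<forall>(x, y)\<in>P. qkernel (cvec x y) p q"
  then show ?thesis
    using orthogonal_complex_structure_cstruct[OF assms(1)] cstruct_eq_if_qkernel[OF assms(1)]
    by blast
next
  assume "\<forall>(x, y)\<in>P. qleft_kernel (cvec x y) p q"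
  then have "\<forall>(x, y)\<in>P. cstruct p q (reflect3 x) = reflect3 y"
    by (auto simp: qleft_kernel_cvec_iff intro: cstruct_eq_if_qkernel[OF assms(1)])
  then have "\<forall>(x, y)\<in>P. (reflect3 \<circ> cstruct p q \<circ> reflect3) x = y"
    by auto
  moreover have "orthogonal_complex_structure (reflect3 \<circ> cstruct p q \<circ> reflect3)"
    using orthogonal_complex_structure_cstruct[OF assms(1)]
    by (rule orthogonal_complex_structure_conj) (simp_all add: linear_reflect3 norm_reflect3)
  ultimately show ?thesis by blast
qed

section \<open>Holomorphic families of singular matrices\<close>

lemma open_nonzero_set:
  assumes "f holomorphic_on S" "open S"
  shows "open {w \<in> S. f w \<noteq> 0}"
proof -
  have "open (S \<inter> f -` (- {0}))"
    using assms by (intro continuous_open_preimage holomorphic_on_imp_continuous_on) auto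
  then show ?thesis by (simp add: vimage_def Int_def)
qed

lemma holomorphic_mult_eq_0_imp_eq_0:
  assumes "f holomorphic_on S" "g holomorphic_on S" "open S" "connected S"
    and "\<And>w. w \<in> S \<Longrightarrow> f w * g w = 0" "z0 \<in> S" "f z0 \<noteq> 0" "z \<in> S"
  shows "g z = 0"
  by (rule analytic_continuation_open[of "{w \<in> S. f w \<noteq> 0}" S g "\<lambda>_. 0"])
     (use assms open_nonzero_set in auto)

lemma has_field_derivative_eq_0_if_vanishing:
  assumes "(f has_field_derivative D) (at z)" "open S" "z \<in> S" "\<And>w. w \<in> S \<Longrightarrow> f w = 0"
  shows "D = 0"
proof -
  have "((\<lambda>_. 0) has_field_derivative D) (at z)"
    by (rule has_field_derivative_transform_within_open[OF assms(1,2,3)]) (use assms(4) in auto)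
  then show ?thesis using DERIV_unique DERIV_const by blast
qed

text \<open>Vanishing of the Wronskian makes b / a locally constant near z0, and the identity theorem
  propagates the proportionality to all of S.\<close>
lemma proportional_if_wronskian_eq_0:
  assumes "a holomorphic_on S" "b holomorphic_on S" "open S" "connected S"
    and "\<And>w. w \<in> S \<Longrightarrow> a w * deriv b w = b w * deriv a w"
    and "z0 \<in> S" "a z0 \<noteq> 0" "z \<in> S"
  shows "a z * b z0 = b z * a z0"
proof -
  obtain e where e: "e > 0" "ball z0 e \<subseteq> {w \<in> S. a w \<noteq> 0}"
    using open_nonzero_set[OF assms(1,3)] assms(6,7) open_contains_ball by blast
  have "\<exists>k. \<forall>w\<in>ball z0 e. b w / a w = k"
  proof (rule has_field_derivative_zero_constant)
    fix w assume w: "w \<in> ball z0 e"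
    with e have "w \<in> S" "a w \<noteq> 0" by auto
    then have "((\<lambda>w. b w / a w) has_field_derivative
        (deriv b w * a w - b w * deriv a w) / (a w * a w)) (at w)"
      using assms by (intro DERIV_divide holomorphic_derivI) auto
    with \<open>w \<in> S\<close> assms(5) show "((\<lambda>w. b w / a w) has_field_derivative 0) (at w within ball z0 e)"
      by (simp add: has_field_derivative_at_within mult.commute)
  qed simp
  then obtain k where k: "\<And>w. w \<in> ball z0 e \<Longrightarrow> b w / a w = k" by blast
  have "a w * b z0 = b w * a z0" if "w \<in> ball z0 e" for w
  proof -
    have "a w \<noteq> 0" using that e by auto
    moreover have "b w / a w = b z0 / a z0" using k that \<open>e > 0\<close> by simp
    ultimately show ?thesis using assms(7) by (simp add: field_simps)
  qed
  moreover have "ball z0 e \<subseteq> S" using e by auto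
  moreover have "(\<lambda>w. a w * b z0) holomorphic_on S" "(\<lambda>w. b w * a z0) holomorphic_on S"
    using assms(1,2) by (auto intro: holomorphic_intros)
  ultimately show ?thesis
    using analytic_continuation_open[of "ball z0 e" S "\<lambda>w. a w * b z0" "\<lambda>w. b w * a z0" z]
      assms(3,4,8) \<open>e > 0\<close> by simp
qed

lemma kernel_of_singular_at_nonzero_entry:
  assumes holo: "a holomorphic_on S" "b holomorphic_on S" "c holomorphic_on S" "d holomorphic_on S"
    and S: "open S" "connected S"
    and det: "\<And>w. w \<in> S \<Longrightarrow> a w * d w = b w * c w"
    and wronskian: "\<And>w. w \<in> S \<Longrightarrow> a w * deriv b w = b w * deriv a w"
    and z0: "z0 \<in> S" "a z0 \<noteq> 0" and z: "z \<in> S"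
  shows "a z * b z0 + b z * - a z0 = 0 \<and> c z * b z0 + d z * - a z0 = 0"
proof -
  have row1: "a w * b z0 = b w * a z0" if "w \<in> S" for w
    using proportional_if_wronskian_eq_0[OF holo(1,2) S wronskian z0 that] by blast
  have "a w * (c w * b z0 - d w * a z0) = c w * (a w * b z0 - b w * a z0)" if "w \<in> S" for w
    using det[OF that] by (simp add: algebra_simps)
  then have "a w * (c w * b z0 - d w * a z0) = 0" if "w \<in> S" for w
    using row1 that by simp
  then have "c z * b z0 - d z * a z0 = 0"
    using holo S z0 z
    by (intro holomorphic_mult_eq_0_imp_eq_0[of a S "\<lambda>w. c w * b z0 - d w * a z0"])
      (auto intro!: holomorphic_intros)
  then show ?thesis using row1[OF z] by simp
qed

lemma constant_kernel_if_wronskians_eq_0: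
  assumes holo: "a holomorphic_on S" "b holomorphic_on S" "c holomorphic_on S" "d holomorphic_on S"
    and S: "open S" "connected S"
    and det: "\<And>w. w \<in> S \<Longrightarrow> a w * d w = b w * c w"
    and wronskian1: "\<And>w. w \<in> S \<Longrightarrow> a w * deriv b w = b w * deriv a w"
    and wronskian2: "\<And>w. w \<in> S \<Longrightarrow> c w * deriv d w = d w * deriv c w"
  shows "\<exists>p q. (p, q) \<noteq> (0, 0) \<and> (\<forall>z\<in>S. a z * p + b z * q = 0 \<and> c z * p + d z * q = 0)"
proof (cases "\<exists>z0\<in>S. a z0 \<noteq> 0 \<or> b z0 \<noteq> 0 \<or> c z0 \<noteq> 0 \<or> d z0 \<noteq> 0")
  case True
  then obtain z0 where z0: "z0 \<in> S" and "a z0 \<noteq> 0 \<or> b z0 \<noteq> 0 \<or> c z0 \<noteq> 0 \<or> d z0 \<noteq> 0"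
    by blast
  then consider "a z0 \<noteq> 0" | "b z0 \<noteq> 0" | "c z0 \<noteq> 0" | "d z0 \<noteq> 0" by blast
  then show ?thesis
  proof cases
    case 1
    with z0 show ?thesis
      using kernel_of_singular_at_nonzero_entry[of a S b c d, OF holo S det wronskian1 z0]
      by (intro exI[of _ "b z0"] exI[of _ "- a z0"]) auto
  next
    case 2
    with z0 show ?thesis
      using kernel_of_singular_at_nonzero_entry[of b S a d c, OF holo(2,1,4,3) S _ _ z0]
        det wronskian1 by (intro exI[of _ "b z0"] exI[of _ "- a z0"]) (auto simp: algebra_simps)
  next
    case 3
    with z0 show ?thesis
      using kernel_of_singular_at_nonzero_entry[of c S d a b, OF holo(3,4,1,2) S _ wronskian2 z0]
        det by (intro exI[of _ "d z0"] exI[of _ "- c z0"]) (auto simp: algebra_simps)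
  next
    case 4
    with z0 show ?thesis
      using kernel_of_singular_at_nonzero_entry[of d S c b a, OF holo(4,3,2,1) S _ _ z0]
        det wronskian2 by (intro exI[of _ "d z0"] exI[of _ "- c z0"]) (auto simp: algebra_simps)
  qed
next
  case False
  then show ?thesis by (intro exI[of _ 1] exI[of _ 0]) auto
qed

lemma wronskian_products_eq_0:
  fixes a b c d a' b' c' d' :: "'a::comm_ring_1"
  assumes "a * d = b * c" "a * d' + a' * d = b * c' + b' * c" "a' * d' = b' * c'"
  shows "(a * b' - b * a') * (a * c' - c * a') = 0" "(a * b' - b * a') * (b * d' - d * b') = 0"
    "(c * d' - d * c') * (a * c' - c * a') = 0" "(c * d' - d * c') * (b * d' - d * b') = 0"
proof -
  let ?E1 = "a * d - b * c" and ?E2 = "a * d' + a' * d - (b * c' + b' * c)" and ?E3 = "a' * d' - b' * c'"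
  have E: "?E1 = 0" "?E2 = 0" "?E3 = 0" using assms by simp_all
  have "(a * b' - b * a') * (a * c' - c * a') = a * a' * ?E2 - a * a * ?E3 - a' * a' * ?E1"
    "(a * b' - b * a') * (b * d' - d * b') = b * b' * ?E2 - b * b * ?E3 - b' * b' * ?E1"
    "(c * d' - d * c') * (a * c' - c * a') = c * c' * ?E2 - c * c * ?E3 - c' * c' * ?E1"
    "(c * d' - d * c') * (b * d' - d * b') = d * d' * ?E2 - d * d * ?E3 - d' * d' * ?E1"
    by (simp_all add: algebra_simps)
  then show "(a * b' - b * a') * (a * c' - c * a') = 0" "(a * b' - b * a') * (b * d' - d * b') = 0"
    "(c * d' - d * c') * (a * c' - c * a') = 0" "(c * d' - d * c') * (b * d' - d * b') = 0"
    unfolding E by simp_all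
qed

text \<open>The product rule turns the three determinant identities into the vanishing of every
  product of a row Wronskian with a column Wronskian; by the identity theorem all row Wronskians
  or all column Wronskians vanish.\<close>
lemma constant_kernel_of_singular_matrix:
  assumes holo: "a holomorphic_on S" "b holomorphic_on S" "c holomorphic_on S" "d holomorphic_on S"
    and S: "open S" "connected S"
    and det: "\<And>w. w \<in> S \<Longrightarrow> a w * d w = b w * c w"
    and det': "\<And>w. w \<in> S \<Longrightarrow> deriv a w * deriv d w = deriv b w * deriv c w"
  shows "\<exists>p q. (p, q) \<noteq> (0, 0) \<and>
           ((\<forall>z\<in>S. a z * p + b z * q = 0 \<and> c z * p + d z * q = 0) \<or>
            (\<forall>z\<in>S. a z * p + c z * q = 0 \<and> b z * p + d z * q = 0))"
proof -
  have D: "(f has_field_derivative deriv f z) (at z)" if "f holomorphic_on S" "z \<in> S" for f z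
    using holomorphic_derivI[OF that(1) S(1) that(2)] .
  have det_deriv: "a z * deriv d z + deriv a z * d z = b z * deriv c z + deriv b z * c z"
    if "z \<in> S" for z
  proof -
    have "((\<lambda>w. a w * d w - b w * c w) has_field_derivative
        (a z * deriv d z + deriv a z * d z) - (b z * deriv c z + deriv b z * c z)) (at z)"
      using D[OF holo(1) that] D[OF holo(2) that] D[OF holo(3) that] D[OF holo(4) that]
      by (auto intro!: derivative_eq_intros simp: algebra_simps)
    then show ?thesis
      using has_field_derivative_eq_0_if_vanishing[OF _ S(1) that] det by fastforce
  qed
  define wr where "wr f g w = f w * deriv g w - g w * deriv f w" for f g :: "complex \<Rightarrow> complex" and w
  have holo_wr: "wr f g holomorphic_on S" if "f holomorphic_on S" "g holomorphic_on S" for f g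
    unfolding wr_def using that S(1) by (intro holomorphic_intros holomorphic_deriv)
  have prods: "wr a b w * wr a c w = 0" "wr a b w * wr b d w = 0"
    "wr c d w * wr a c w = 0" "wr c d w * wr b d w = 0" if "w \<in> S" for w
    unfolding wr_def using wronskian_products_eq_0[OF det[OF that] det_deriv[OF that] det'[OF that]] .
  show ?thesis
  proof (cases "\<forall>w\<in>S. wr a b w = 0 \<and> wr c d w = 0")
    case True
    then have "\<exists>p q. (p, q) \<noteq> (0, 0) \<and> (\<forall>z\<in>S. a z * p + b z * q = 0 \<and> c z * p + d z * q = 0)"
      using det by (intro constant_kernel_if_wronskians_eq_0[OF holo S]) (auto simp: wr_def)
    then show ?thesis by blast
  next
    case False
    then obtain z1 where z1: "z1 \<in> S" "wr a b z1 \<noteq> 0 \<or> wr c d z1 \<noteq> 0" by blast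
    have "wr a c w = 0 \<and> wr b d w = 0" if "w \<in> S" for w
      using z1(2)
    proof
      assume "wr a b z1 \<noteq> 0"
      then show ?thesis
        using holomorphic_mult_eq_0_imp_eq_0[OF holo_wr[OF holo(1,2)] _ S prods(1) z1(1)]
          holomorphic_mult_eq_0_imp_eq_0[OF holo_wr[OF holo(1,2)] _ S prods(2) z1(1)]
          holo_wr holo that by blast
    next
      assume "wr c d z1 \<noteq> 0"
      then show ?thesis
        using holomorphic_mult_eq_0_imp_eq_0[OF holo_wr[OF holo(3,4)] _ S prods(3) z1(1)]
          holomorphic_mult_eq_0_imp_eq_0[OF holo_wr[OF holo(3,4)] _ S prods(4) z1(1)]
          holo_wr holo that by blast
    qed
    then have "\<exists>p q. (p, q) \<noteq> (0, 0) \<and> (\<forall>z\<in>S. a z * p + c z * q = 0 \<and> b z * p + d z * q = 0)"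
      using det by (intro constant_kernel_if_wronskians_eq_0[OF holo(1,3,2,4) S])
        (auto simp: wr_def mult.commute)
    then show ?thesis by blast
  qed
qed

section \<open>Null holomorphic curves\<close>

lemma linear_relation_deriv:
  assumes "open S" "z \<in> S" "\<And>w. w \<in> S \<Longrightarrow> f w * p + g w * q = 0"
    and "(f has_field_derivative f') (at z)" "(g has_field_derivative g') (at z)"
  shows "f' * p + g' * q = 0"
proof -
  have "((\<lambda>w. f w * p + g w * q) has_field_derivative f' * p + g' * q) (at z)"
    using assms(4,5) by (auto intro!: derivative_eq_intros)
  then show ?thesis by (rule has_field_derivative_eq_0_if_vanishing[OF _ assms(1-3)])
qed

lemma null_curve_constant_kernel:
  fixes Z Z' :: "complex \<Rightarrow> 4 \<Rightarrow> complex"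
  assumes S: "open S" "connected S"
    and Z': "\<And>z k. z \<in> S \<Longrightarrow> ((\<lambda>w. Z w k) has_field_derivative Z' z k) (at z)"
    and null: "\<And>z. z \<in> S \<Longrightarrow> cdot (Z z) (Z z) = 0"
    and null': "\<And>z. z \<in> S \<Longrightarrow> cdot (Z' z) (Z' z) = 0"
  shows "\<exists>p q. (p, q) \<noteq> (0, 0) \<and>
           ((\<forall>z\<in>S. qkernel (Z z) p q \<and> qkernel (Z' z) p q) \<or>
            (\<forall>z\<in>S. qleft_kernel (Z z) p q \<and> qleft_kernel (Z' z) p q))"
proof -
  have D: "((\<lambda>w. qmat11 (Z w)) has_field_derivative qmat11 (Z' z)) (at z)"
    "((\<lambda>w. qmat12 (Z w)) has_field_derivative qmat12 (Z' z)) (at z)"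
    "((\<lambda>w. qmat21 (Z w)) has_field_derivative qmat21 (Z' z)) (at z)"
    "((\<lambda>w. qmat22 (Z w)) has_field_derivative qmat22 (Z' z)) (at z)" if "z \<in> S" for z
    unfolding qmat11_def qmat12_def qmat21_def qmat22_def
    by (auto intro!: derivative_eq_intros Z'[OF that])
  have holo: "(\<lambda>w. qmat11 (Z w)) holomorphic_on S" "(\<lambda>w. qmat12 (Z w)) holomorphic_on S"
    "(\<lambda>w. qmat21 (Z w)) holomorphic_on S" "(\<lambda>w. qmat22 (Z w)) holomorphic_on S"
    unfolding holomorphic_on_open[OF S(1)] using D by blast+
  have det: "qmat11 (Z z) * qmat22 (Z z) = qmat12 (Z z) * qmat21 (Z z)"
    and det': "deriv (\<lambda>w. qmat11 (Z w)) z * deriv (\<lambda>w. qmat22 (Z w)) z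
      = deriv (\<lambda>w. qmat12 (Z w)) z * deriv (\<lambda>w. qmat21 (Z w)) z" if "z \<in> S" for z
    using det_qmat[of "Z z"] det_qmat[of "Z' z"] null[OF that] null'[OF that]
    by (simp_all add: DERIV_imp_deriv[OF D(1)[OF that]] DERIV_imp_deriv[OF D(2)[OF that]]
        DERIV_imp_deriv[OF D(3)[OF that]] DERIV_imp_deriv[OF D(4)[OF that]])
  obtain p q where pq: "(p, q) \<noteq> (0, 0)"
    and ker: "(\<forall>z\<in>S. qkernel (Z z) p q) \<or> (\<forall>z\<in>S. qleft_kernel (Z z) p q)"
    using constant_kernel_of_singular_matrix[OF holo S det det']
    unfolding qkernel_def qleft_kernel_def by blast
  have "qkernel (Z' z) p q" if "\<forall>w\<in>S. qkernel (Z w) p q" "z \<in> S" for z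
    using that unfolding qkernel_def
    by (intro conjI linear_relation_deriv[OF S(1) \<open>z \<in> S\<close> _ D(1,2)[OF \<open>z \<in> S\<close>]]
        linear_relation_deriv[OF S(1) \<open>z \<in> S\<close> _ D(3,4)[OF \<open>z \<in> S\<close>]]) auto
  moreover have "qleft_kernel (Z' z) p q" if "\<forall>w\<in>S. qleft_kernel (Z w) p q" "z \<in> S" for z
    using that unfolding qleft_kernel_def
    by (intro conjI linear_relation_deriv[OF S(1) \<open>z \<in> S\<close> _ D(1,3)[OF \<open>z \<in> S\<close>]]
        linear_relation_deriv[OF S(1) \<open>z \<in> S\<close> _ D(2,4)[OF \<open>z \<in> S\<close>]]) auto
  ultimately show ?thesis using pq ker by blast
qed

lemma linear_eq_Re_Im:
  assumes "linear L"
  shows "L v = Re v *\<^sub>R L 1 + Im v *\<^sub>R L \<i>"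
proof -
  have v: "Re v *\<^sub>R 1 + Im v *\<^sub>R \<i> = v" by (simp add: complex_eq_iff)
  have "L (Re v *\<^sub>R 1 + Im v *\<^sub>R \<i>) = Re v *\<^sub>R L 1 + Im v *\<^sub>R L \<i>"
    using assms by (simp add: linear_add linear_cmul)
  then show ?thesis by (simp only: v)
qed

lemma cvec_has_field_derivative:
  assumes g: "(g has_derivative L) (at z)" and h: "(h has_derivative (\<lambda>v. L (\<i> * v))) (at z)"
  shows "((\<lambda>w. cvec (g w) (h w) k) has_field_derivative cvec (L 1) (L \<i>) k) (at z)"
proof -
  have "((\<lambda>w. cvec (g w) (h w) k) has_derivative
      (\<lambda>v. complex_of_real (L v $ k) - \<i> * complex_of_real (L (\<i> * v) $ k))) (at z)"
    unfolding cvec_def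
    by (intro has_derivative_diff has_derivative_mult_right
        bounded_linear.has_derivative[OF bounded_linear_of_real]
        bounded_linear.has_derivative[OF bounded_linear_vec_nth] g h)
  moreover have "complex_of_real (L v $ k) - \<i> * complex_of_real (L (\<i> * v) $ k)
      = cvec (L 1) (L \<i>) k * v" for v
  proof -
    have e: "L v = Re v *\<^sub>R L 1 + Im v *\<^sub>R L \<i>"
      "L (\<i> * v) = Re v *\<^sub>R L \<i> - Im v *\<^sub>R L 1"
      using linear_eq_Re_Im[OF has_derivative_linear[OF g], of v]
        linear_eq_Re_Im[OF has_derivative_linear[OF g], of "\<i> * v"] by simp_all
    show ?thesis unfolding e by (simp add: cvec_def complex_eq_iff algebra_simps)
  qed
  ultimately show ?thesis by (simp add: has_field_derivative_def)
qed

lemma complex_structure_of_null_pair: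
  fixes g h :: "complex \<Rightarrow> real^4" and L :: "complex \<Rightarrow> complex \<Rightarrow> real^4"
  assumes U: "open U" "connected U"
    and dg: "\<And>z. z \<in> U \<Longrightarrow> (g has_derivative L z) (at z)"
    and dh: "\<And>z. z \<in> U \<Longrightarrow> (h has_derivative (\<lambda>v. L z (\<i> * v))) (at z)"
    and null: "\<And>z. z \<in> U \<Longrightarrow> g z \<bullet> h z = 0 \<and> norm (g z) = norm (h z)"
    and null': "\<And>z. z \<in> U \<Longrightarrow> L z 1 \<bullet> L z \<i> = 0 \<and> norm (L z 1) = norm (L z \<i>)"
  shows "\<exists>J. orthogonal_complex_structure J \<and> (\<forall>z\<in>U. J (g z) = h z \<and> J (L z 1) = L z \<i>)"
proof -
  have Z': "((\<lambda>w. cvec (g w) (h w) k) has_field_derivative cvec (L z 1) (L z \<i>) k) (at z)"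
    if "z \<in> U" for z k
    using cvec_has_field_derivative[OF dg[OF that] dh[OF that]] .
  have "cdot (cvec (g z) (h z)) (cvec (g z) (h z)) = 0"
    "cdot (cvec (L z 1) (L z \<i>)) (cvec (L z 1) (L z \<i>)) = 0" if "z \<in> U" for z
    using null[OF that] null'[OF that] by (simp_all add: cdot_cvec_self)
  from null_curve_constant_kernel[OF U Z' this] obtain p q where pq: "(p, q) \<noteq> (0, 0)"
    and kernel: "(\<forall>z\<in>U. qkernel (cvec (g z) (h z)) p q \<and> qkernel (cvec (L z 1) (L z \<i>)) p q) \<or>
      (\<forall>z\<in>U. qleft_kernel (cvec (g z) (h z)) p q \<and> qleft_kernel (cvec (L z 1) (L z \<i>)) p q)"
    by blast
  let ?P = "(\<lambda>z. (g z, h z)) ` U \<union> (\<lambda>z. (L z 1, L z \<i>)) ` U"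
  have on_P: "\<forall>(x, y)\<in>?P. N x y" if "\<forall>z\<in>U. N (g z) (h z) \<and> N (L z 1) (L z \<i>)" for N
    using that by blast
  have "(\<forall>(x, y)\<in>?P. qkernel (cvec x y) p q) \<or> (\<forall>(x, y)\<in>?P. qleft_kernel (cvec x y) p q)"
    using kernel on_P[of "\<lambda>x y. qkernel (cvec x y) p q"]
      on_P[of "\<lambda>x y. qleft_kernel (cvec x y) p q"] by blast
  from complex_structure_of_common_kernel[OF pq this] obtain J
    where J: "orthogonal_complex_structure J" and graph: "\<forall>(x, y)\<in>?P. J x = y"
    by blast
  have "J (g z) = h z \<and> J (L z 1) = L z \<i>" if "z \<in> U" for z
  proof -
    have "(g z, h z) \<in> ?P" "(L z 1, L z \<i>) \<in> ?P"
      using that by (auto simp: image_iff)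
    from bspec[OF graph this(1)] bspec[OF graph this(2)] show ?thesis by simp
  qed
  with J show ?thesis by blast
qed

lemma linear_mult_i_eq_if_basis:
  assumes J: "linear J" "\<And>x. J (J x) = - x" and L: "linear L" "J (L 1) = L \<i>"
  shows "L (\<i> * v) = J (L v)"
proof -
  have Ji: "J (L \<i>) = - L 1" using J(2) by (simp flip: L(2))
  have "L (\<i> * v) = Re v *\<^sub>R L \<i> - Im v *\<^sub>R L 1"
    using linear_eq_Re_Im[OF L(1), of "\<i> * v"] by simp
  also have "\<dots> = J (Re v *\<^sub>R L 1 + Im v *\<^sub>R L \<i>)"
    using J(1) by (simp add: linear_add linear_cmul L(2) Ji)
  also have "\<dots> = J (L v)" by (simp flip: linear_eq_Re_Im[OF L(1), of v])
  finally show ?thesis .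
qed

theorem mainTheorem9:
  fixes U :: "complex set" and g h :: "complex \<Rightarrow> real^4"
  assumes "simply_connected U"
    and "conformal_minimal_immersion U g"
    and "\<forall>z\<in>U. (h has_derivative (\<lambda>v. dmap g z (\<i> * v))) (at z)"
    and "\<forall>z\<in>U. g z \<bullet> h z = 0"
    and "\<forall>z\<in>U. norm (g z) = norm (h z)"
  shows "\<exists>JJ :: real^4 \<Rightarrow> real^4. linear JJ \<and> (\<forall>x. norm (JJ x) = norm x) \<and>
           (\<forall>x. JJ (JJ x) = - x) \<and>
           (\<forall>z\<in>U. \<forall>v. dmap g z (\<i> * v) = JJ (dmap g z v)) \<and>
           (\<forall>z\<in>U. h z = JJ (g z))"
proof -
  have immersion: "conformal_immersion U g"
    using assms(2) by (simp add: conformal_minimal_immersion_def)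
  have U: "open U" "connected U"
    using immersion assms(1) simply_connected_imp_connected by (auto simp: conformal_immersion_def)
  have dg: "(g has_derivative dmap g z) (at z)" if "z \<in> U" for z
    using immersion that unfolding conformal_immersion_def
    by (simp add: dmap_def frechet_derivative_works)
  have "dmap g z 1 \<bullet> dmap g z \<i> = 0 \<and> norm (dmap g z 1) = norm (dmap g z \<i>)" if "z \<in> U" for z
    using immersion that by (simp add: conformal_immersion_def)
  from complex_structure_of_null_pair[OF U dg _ _ this] assms(3-5) obtain J
    where J: "orthogonal_complex_structure J"
      and graph: "\<forall>z\<in>U. J (g z) = h z \<and> J (dmap g z 1) = dmap g z \<i>"
    by blast
  then have J_lin: "linear J" and J_norm: "\<And>x. norm (J x) = norm x" and J_sq: "\<And>x. J (J x) = - x"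
    by (simp_all add: orthogonal_complex_structure_def)
  have "dmap g z (\<i> * v) = J (dmap g z v)" if "z \<in> U" for z v
    using linear_mult_i_eq_if_basis[OF J_lin J_sq has_derivative_linear[OF dg[OF that]]]
      graph that by blast
  with graph show ?thesis
    by (intro exI[of _ J] conjI allI ballI J_lin J_norm J_sq) auto
qed

end
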